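(* Let $\mathcal{A}$ be a Desargues affine plane, let $O\neq I$ be points, and let $\varphi$ be a translation of $\mathcal{A}$. Equip $\ell^{OI}$ with the skew field structure with zero $O$ and unit $I$, and the line $\varphi(\ell^{OI})$ with the skew field structure with zero $\varphi(O)$ and unit $\varphi(I)$. Then for all $A,B,C\in\ell^{OI}$ with $B\neq C$, \[ \varphi(r(A,B;C))=r(\varphi(A),\varphi(B);\varphi(C)), \] where the ratio on the left is computed in $\ell^{OI}$ and the ratio on the right in $\varphi(\ell^{OI})$.
   Context: A Desargues affine plane is an incidence structure of points and lines in which any two distinct points lie on exactly one line, through a point not on a line $\ell$ there is exactly one line disjoint from $\ell$ (Playfair), there exist three non-collinear points, and Desargues' axiom holds: if $A,B,C,A',B',C'$ are points such that the pairwise distinct lines $AA',BB',CC'$ are either all parallel or all pass through one point, and $AB\parallel A'B'$, $BC\parallel B'C'$ (with $AB\neq A'B'$, $BC\neq B'C'$, $A\ne C$, $A'\ne C'$), then $AC\parallel A'C'$. Skew field on a line: for distinct points $O,I$ and points $A,B$ on the line $\ell^{OI}$, addition is defined by: choose a point $B_1\notin\ell^{OI}$; let $P_1$ be the intersection of the line through $B_1$ parallel to $\ell^{OI}$ with the line through $A$ parallel to $OB_1$; then $A+B$ is the intersection of $\ell^{OI}$ with the line through $P_1$ parallel to $BB_1$. Multiplication is defined by: choose $B_1\notin\ell^{OI}$; let $P_1$ be the intersection of the line through $A$ parallel to $IB_1$ with the line $OB_1$; then $A\cdot B$ is the intersection of $\ell^{OI}$ with the line through $P_1$ parallel to $BB_1$.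 These operations do not depend on the choice of $B_1$ and make $(\ell^{OI},+,\cdot)$ a skew field with zero $O$ and unit $I$; the same construction applies to any line with any chosen pair of distinct points as zero and unit. $-X$ and $X^{-1}$ denote additive and multiplicative inverses, $X-Y=X+(-Y)$. Ratio of three points on such a line: $r(A,B;C)=(B-C)^{-1}(A-C)$ for $B\neq C$. A dilatation of $\mathcal{A}$ is a collineation $\delta$ such that $\delta(P)\delta(Q)\parallel PQ$ for all points $P\neq Q$. A translation is either the identity or a dilatation with no fixed point. *)

theory Defs
  imports Main
begin

definition line :: "'p set set \<Rightarrow> 'p \<Rightarrow> 'p \<Rightarrow> 'p set" where
  "line L A B = (THE l. l \<in> L \<and> A \<in> l \<and> B \<in> l)"

definition parallel :: "'p set set \<Rightarrow> 'p set \<Rightarrow> 'p set \<Rightarrow> bool" where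
  "parallel L l m \<longleftrightarrow> l \<in> L \<and> m \<in> L \<and> (l = m \<or> l \<inter> m = {})"

definition par_line :: "'p set set \<Rightarrow> 'p \<Rightarrow> 'p set \<Rightarrow> 'p set" where
  "par_line L P l = (THE m. m \<in> L \<and> P \<in> m \<and> parallel L m l)"

definition meet :: "'p set \<Rightarrow> 'p set \<Rightarrow> 'p" where
  "meet l m = (THE X. X \<in> l \<and> X \<in> m)"

definition collinear :: "'p set set \<Rightarrow> 'p \<Rightarrow> 'p \<Rightarrow> 'p \<Rightarrow> bool" where
  "collinear L A B C \<longleftrightarrow> (\<exists>l\<in>L. A \<in> l \<and> B \<in> l \<and> C \<in> l)"

definition desargues_affine_plane :: "'p set set \<Rightarrow> bool" where
  "desargues_affine_plane L \<longleftrightarrow>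
     (\<forall>l\<in>L. \<exists>A B. A \<noteq> B \<and> A \<in> l \<and> B \<in> l) \<and>
     (\<forall>A B. A \<noteq> B \<longrightarrow> (\<exists>!l. l \<in> L \<and> A \<in> l \<and> B \<in> l)) \<and>
     (\<forall>l\<in>L. \<forall>P. P \<notin> l \<longrightarrow> (\<exists>!m. m \<in> L \<and> P \<in> m \<and> m \<inter> l = {})) \<and>
     (\<exists>A B C. \<not> collinear L A B C) \<and>
     (\<forall>A B C A' B' C'.
        A \<noteq> A' \<and> B \<noteq> B' \<and> C \<noteq> C' \<and> A \<noteq> B \<and> A' \<noteq> B' \<and> B \<noteq> C \<and> B' \<noteq> C' \<and>
        A \<noteq> C \<and> A' \<noteq> C' \<and>
        line L A A' \<noteq> line L B B' \<and> line L B B' \<noteq> line L C C' \<and>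
        line L A A' \<noteq> line L C C' \<and>
        ((parallel L (line L A A') (line L B B') \<and> parallel L (line L B B') (line L C C') \<and>
          parallel L (line L A A') (line L C C'))
         \<or> (\<exists>X. X \<in> line L A A' \<and> X \<in> line L B B' \<and> X \<in> line L C C')) \<and>
        parallel L (line L A B) (line L A' B') \<and> parallel L (line L B C) (line L B' C') \<and>
        line L A B \<noteq> line L A' B' \<and> line L B C \<noteq> line L B' C'
        \<longrightarrow> parallel L (line L A C) (line L A' C'))"

text \<open>Skew field operations on the line through Z and U (zero Z, unit U).\<close>
definition add_on :: "'p set set \<Rightarrow> 'p \<Rightarrow> 'p \<Rightarrow> 'p \<Rightarrow> 'p \<Rightarrow> 'p" where
  "add_on L Z U A B =
    (let l = line L Z U; B1 = (SOME B1. B1 \<notin> l);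
         P1 = meet (par_line L B1 l) (par_line L A (line L Z B1))
     in meet l (par_line L P1 (line L B B1)))"

definition mul_on :: "'p set set \<Rightarrow> 'p \<Rightarrow> 'p \<Rightarrow> 'p \<Rightarrow> 'p \<Rightarrow> 'p" where
  "mul_on L Z U A B =
    (let l = line L Z U; B1 = (SOME B1. B1 \<notin> l);
         P1 = meet (par_line L A (line L U B1)) (line L Z B1)
     in meet l (par_line L P1 (line L B B1)))"

definition neg_on :: "'p set set \<Rightarrow> 'p \<Rightarrow> 'p \<Rightarrow> 'p \<Rightarrow> 'p" where
  "neg_on L Z U X = (THE Y. Y \<in> line L Z U \<and> add_on L Z U X Y = Z)"

definition inv_on :: "'p set set \<Rightarrow> 'p \<Rightarrow> 'p \<Rightarrow> 'p \<Rightarrow> 'p" where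
  "inv_on L Z U X = (THE Y. Y \<in> line L Z U \<and> mul_on L Z U X Y = U)"

definition sub_on :: "'p set set \<Rightarrow> 'p \<Rightarrow> 'p \<Rightarrow> 'p \<Rightarrow> 'p \<Rightarrow> 'p" where
  "sub_on L Z U X Y = add_on L Z U X (neg_on L Z U Y)"

definition ratio :: "'p set set \<Rightarrow> 'p \<Rightarrow> 'p \<Rightarrow> 'p \<Rightarrow> 'p \<Rightarrow> 'p \<Rightarrow> 'p" where
  "ratio L Z U A B C = mul_on L Z U (inv_on L Z U (sub_on L Z U B C)) (sub_on L Z U A C)"

definition collineation :: "'p set set \<Rightarrow> ('p \<Rightarrow> 'p) \<Rightarrow> bool" where
  "collineation L f \<longleftrightarrow> bij f \<and> (\<forall>l. f ` l \<in> L \<longleftrightarrow> l \<in> L)"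

definition dilatation :: "'p set set \<Rightarrow> ('p \<Rightarrow> 'p) \<Rightarrow> bool" where
  "dilatation L f \<longleftrightarrow> collineation L f \<and>
     (\<forall>P Q. P \<noteq> Q \<longrightarrow> parallel L (line L (f P) (f Q)) (line L P Q))"

definition translation :: "'p set set \<Rightarrow> ('p \<Rightarrow> 'p) \<Rightarrow> bool" where
  "translation L f \<longleftrightarrow> f = id \<or> (dilatation L f \<and> (\<forall>P. f P \<noteq> P))"

end

theory Submission
  imports Defs
begin

text \<open>A collineation carries the construction of \<open>A + B\<close> and \<open>A \<cdot> B\<close> on a line \<open>l\<close>,
  performed with an auxiliary point \<open>b \<notin> l\<close>, onto the same construction on the image line
  performed with the auxiliary point \<open>\<phi> b\<close>. The definitions, however, fix the auxiliary point
  of each line by Hilbert choice, so the heart of the proof is that sum and product do not depend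
  on the auxiliary point. Two applications of Desargues' axiom show this whenever the new point
  \<open>c\<close> avoids one line through \<open>b\<close> (the parallel to \<open>l\<close> for the sum, the line \<open>Zb\<close> for the
  product); the other positions of \<open>c\<close> are reached through an intermediate auxiliary point,
  except in the plane of order 2, where the sum is determined directly. Negatives and inverses
  are characterised by equations and are therefore preserved as well, hence so is the ratio.\<close>

lemma line_commute: "line L A B = line L B A"
  unfolding line_def by (rule arg_cong[where f = The]) auto

locale desargues_plane =
  fixes L :: "'p set set"
  assumes plane: "desargues_affine_plane L"
begin

section \<open>Incidence and parallelism\<close>

lemma line_has_two_points: "l \<in> L \<Longrightarrow> \<exists>A B. A \<noteq> B \<and> A \<in> l \<and> B \<in> l"
  using plane[unfolded desargues_affine_plane_def, THEN conjunct1] by blast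

lemma unique_line: "A \<noteq> B \<Longrightarrow> \<exists>!l. l \<in> L \<and> A \<in> l \<and> B \<in> l"
  using plane[unfolded desargues_affine_plane_def, THEN conjunct2, THEN conjunct1] by blast

lemma playfair: "l \<in> L \<Longrightarrow> P \<notin> l \<Longrightarrow> \<exists>!m. m \<in> L \<and> P \<in> m \<and> m \<inter> l = {}"
  using plane[unfolded desargues_affine_plane_def, THEN conjunct2, THEN conjunct2, THEN conjunct1]
  by blast

lemma exists_point_off_line: "l \<in> L \<Longrightarrow> \<exists>b. b \<notin> l"
  using plane[unfolded desargues_affine_plane_def, THEN conjunct2, THEN conjunct2, THEN conjunct2,
      THEN conjunct1]
  unfolding collinear_def by blast

lemma some_point_off_line: "l \<in> L \<Longrightarrow> (SOME b. b \<notin> l) \<notin> l"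
  using exists_point_off_line by (rule someI_ex)

lemma desargues:
  assumes "A \<noteq> A'" "B \<noteq> B'" "C \<noteq> C'" "A \<noteq> B" "A' \<noteq> B'" "B \<noteq> C" "B' \<noteq> C'"
    "A \<noteq> C" "A' \<noteq> C'"
    "line L A A' \<noteq> line L B B'" "line L B B' \<noteq> line L C C'" "line L A A' \<noteq> line L C C'"
    "(parallel L (line L A A') (line L B B') \<and> parallel L (line L B B') (line L C C') \<and>
      parallel L (line L A A') (line L C C'))
     \<or> (\<exists>X. X \<in> line L A A' \<and> X \<in> line L B B' \<and> X \<in> line L C C')"
    "parallel L (line L A B) (line L A' B')" "parallel L (line L B C) (line L B' C')"
    "line L A B \<noteq> line L A' B'" "line L B C \<noteq> line L B' C'"
  shows "parallel L (line L A C) (line L A' C')"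
  using plane[unfolded desargues_affine_plane_def, THEN conjunct2, THEN conjunct2, THEN conjunct2,
      THEN conjunct2, rule_format, of A A' B B' C C'] assms
  by blast

lemma line_in_L: "A \<noteq> B \<Longrightarrow> line L A B \<in> L"
  and left_in_line: "A \<noteq> B \<Longrightarrow> A \<in> line L A B"
  and right_in_line: "A \<noteq> B \<Longrightarrow> B \<in> line L A B"
  using theI'[OF unique_line, of A B] unfolding line_def by auto

lemma line_eqI: "A \<noteq> B \<Longrightarrow> l \<in> L \<Longrightarrow> A \<in> l \<Longrightarrow> B \<in> l \<Longrightarrow> line L A B = l"
  using line_in_L left_in_line right_in_line unique_line by blast

lemma lines_eqI: "l \<in> L \<Longrightarrow> m \<in> L \<Longrightarrow> X \<in> l \<Longrightarrow> X \<in> m \<Longrightarrow> Y \<in> l \<Longrightarrow> Y \<in> m \<Longrightarrow> X \<noteq> Y \<Longrightarrow> l = m"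
  using unique_line by blast

lemma parallel_refl: "l \<in> L \<Longrightarrow> parallel L l l"
  by (simp add: parallel_def)

lemma parallel_sym: "parallel L l m \<Longrightarrow> parallel L m l"
  by (auto simp: parallel_def)

lemma parallel_in_L: "parallel L l m \<Longrightarrow> l \<in> L" "parallel L l m \<Longrightarrow> m \<in> L"
  by (auto simp: parallel_def)

lemma parallel_eqI: "parallel L l m \<Longrightarrow> X \<in> l \<Longrightarrow> X \<in> m \<Longrightarrow> l = m"
  by (auto simp: parallel_def)

lemma not_parallelI: "l \<in> L \<Longrightarrow> m \<in> L \<Longrightarrow> l \<noteq> m \<Longrightarrow> X \<in> l \<Longrightarrow> X \<in> m \<Longrightarrow> \<not> parallel L l m"
  by (auto simp: parallel_def)

lemma parallel_trans:
  assumes "parallel L l m" "parallel L m n"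
  shows "parallel L l n"
proof (cases "l = m \<or> m = n")
  case True
  then show ?thesis using assms by auto
next
  case False
  then have disjoint: "l \<inter> m = {}" "m \<inter> n = {}"
    using assms by (auto simp: parallel_def)
  show ?thesis
  proof (rule ccontr)
    assume "\<not> parallel L l n"
    then obtain X where X: "X \<in> l" "X \<in> n" "l \<noteq> n"
      using assms by (auto simp: parallel_def)
    moreover have "X \<notin> m" "n \<inter> m = {}" using X disjoint by auto
    ultimately show False
      using playfair[of m X] disjoint parallel_in_L[OF assms(1)] parallel_in_L[OF assms(2)] by blast
  qed
qed

lemma par_line_ex1:
  assumes "m \<in> L"
  shows "\<exists>!n. n \<in> L \<and> P \<in> n \<and> parallel L n m"
proof (cases "P \<in> m")
  case True
  show ?thesis
    using True assms parallel_refl[OF assms] parallel_eqI by (intro ex1I[of _ m]) auto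
next
  case False
  have "parallel L n m \<longleftrightarrow> n \<inter> m = {}" if "n \<in> L" "P \<in> n" for n
    using that assms False unfolding parallel_def by blast
  then show ?thesis
    using playfair[OF assms False] by metis
qed

lemma par_line_spec:
  "m \<in> L \<Longrightarrow> par_line L P m \<in> L \<and> P \<in> par_line L P m \<and> parallel L (par_line L P m) m"
  unfolding par_line_def by (rule theI') (rule par_line_ex1)

lemma par_line_in_L: "m \<in> L \<Longrightarrow> par_line L P m \<in> L"
  and in_par_line: "m \<in> L \<Longrightarrow> P \<in> par_line L P m"
  and par_line_parallel: "m \<in> L \<Longrightarrow> parallel L (par_line L P m) m"
  using par_line_spec by auto

lemma par_line_eqI: "m \<in> L \<Longrightarrow> n \<in> L \<Longrightarrow> P \<in> n \<Longrightarrow> parallel L n m \<Longrightarrow> par_line L P m = n"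
  using par_line_spec[of m P] par_line_ex1[of m P] by blast

lemma par_line_self: "m \<in> L \<Longrightarrow> P \<in> m \<Longrightarrow> par_line L P m = m"
  by (simp add: par_line_eqI parallel_refl)

lemma par_line_disjoint: "l \<in> L \<Longrightarrow> b \<notin> l \<Longrightarrow> par_line L b l \<inter> l = {}"
  using in_par_line par_line_parallel by (fastforce simp: parallel_def)

lemma meet_mem:
  assumes "l \<in> L" "m \<in> L" "\<not> parallel L l m"
  shows "meet l m \<in> l \<and> meet l m \<in> m"
proof -
  have "\<exists>!X. X \<in> l \<and> X \<in> m"
    using assms lines_eqI parallel_refl by (fastforce simp: parallel_def)
  then show ?thesis
    unfolding meet_def by (rule theI')
qed

lemma meet_eqI: "l \<in> L \<Longrightarrow> m \<in> L \<Longrightarrow> l \<noteq> m \<Longrightarrow> X \<in> l \<Longrightarrow> X \<in> m \<Longrightarrow> meet l m = X"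
  unfolding meet_def by (rule the_equality) (auto dest: lines_eqI)

section \<open>Transfer of a point along a line\<close>

text \<open>For \<open>B \<in> l\<close> and \<open>b, P \<notin> l\<close>, the point of \<open>l\<close> on the parallel to \<open>bB\<close> through \<open>P\<close>: the
  image of \<open>B\<close> under the dilatation with \<open>b \<mapsto> P\<close> that fixes \<open>l\<close> as a set.\<close>

definition transfer :: "'p set \<Rightarrow> 'p \<Rightarrow> 'p \<Rightarrow> 'p \<Rightarrow> 'p" where
  "transfer l b P B = meet l (par_line L P (line L B b))"

lemma line_off_inter_eq: "l \<in> L \<Longrightarrow> X \<in> l \<Longrightarrow> b \<notin> l \<Longrightarrow> Y \<in> l \<Longrightarrow> Y \<in> line L X b \<Longrightarrow> Y = X"
  by (metis left_in_line line_in_L lines_eqI right_in_line)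

lemma par_line_of_mem: "m \<in> L \<Longrightarrow> P \<in> par_line L A m \<Longrightarrow> par_line L P m = par_line L A m"
  by (simp add: par_line_eqI par_line_in_L par_line_parallel)

lemma not_parallel_line_off: "l \<in> L \<Longrightarrow> B \<in> l \<Longrightarrow> b \<notin> l \<Longrightarrow> \<not> parallel L l (line L B b)"
  by (metis not_parallelI left_in_line line_in_L right_in_line)

lemma not_parallel_par_line:
  assumes "l \<in> L" "B \<in> l" "b \<notin> l"
  shows "\<not> parallel L l (par_line L P (line L B b))"
proof
  have "B \<noteq> b" using assms by auto
  assume "parallel L l (par_line L P (line L B b))"
  then have "parallel L l (line L B b)"
    using parallel_trans par_line_parallel line_in_L \<open>B \<noteq> b\<close> by blast
  then show False
    using not_parallel_line_off assms by blast
qed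

lemma transfer_mem:
  assumes "l \<in> L" "B \<in> l" "b \<notin> l"
  shows "transfer l b P B \<in> l" "transfer l b P B \<in> par_line L P (line L B b)"
proof -
  have "B \<noteq> b" using assms by auto
  then show "transfer l b P B \<in> l" "transfer l b P B \<in> par_line L P (line L B b)"
    using meet_mem[OF assms(1) par_line_in_L[OF line_in_L] not_parallel_par_line[OF assms]]
    unfolding transfer_def by auto
qed

lemma transfer_eqI:
  assumes "l \<in> L" "B \<in> l" "b \<notin> l" "R \<in> l" "R \<in> par_line L P (line L B b)"
  shows "transfer l b P B = R"
proof -
  have "B \<noteq> b" using assms by auto
  have "l \<noteq> par_line L P (line L B b)"
    using not_parallel_par_line[OF assms(1-3)] parallel_refl assms(1) by metis
  then show ?thesis
    unfolding transfer_def
    using meet_eqI[OF assms(1) par_line_in_L[OF line_in_L[OF \<open>B \<noteq> b\<close>]]] assms(4,5) by blast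
qed

lemma transfer_of_mem:
  assumes "l \<in> L" "B \<in> l" "b \<notin> l" "P \<in> l"
  shows "transfer l b P B = P"
proof -
  have "B \<noteq> b" using assms by auto
  then show ?thesis
    using transfer_eqI[OF assms] in_par_line line_in_L by blast
qed

lemma transfer_eq_base_iff:
  assumes "l \<in> L" "B \<in> l" "b \<notin> l"
  shows "transfer l b P B = B \<longleftrightarrow> P \<in> line L B b"
proof -
  have "B \<noteq> b" using assms by auto
  then have Bb: "line L B b \<in> L" "B \<in> line L B b"
    using line_in_L left_in_line by auto
  show ?thesis
  proof
    assume "transfer l b P B = B"
    then have "par_line L P (line L B b) = line L B b"
      using transfer_mem(2)[OF assms] parallel_eqI[OF par_line_parallel[OF Bb(1)]] Bb(2) by metis
    then show "P \<in> line L B b"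
      using in_par_line[OF Bb(1)] by metis
  next
    assume "P \<in> line L B b"
    then show "transfer l b P B = B"
      using transfer_eqI[OF assms assms(2)] par_line_self[OF Bb(1)] Bb(2) by metis
  qed
qed

lemma transfer_swap:
  assumes "l \<in> L" "B \<in> l" "b \<notin> l" "P \<notin> l"
  shows "transfer l P b (transfer l b P B) = B"
proof -
  define R where "R = transfer l b P B"
  have R: "R \<in> l" "R \<in> par_line L P (line L B b)"
    using transfer_mem[OF assms(1-3)] R_def by auto
  have "B \<noteq> b" "R \<noteq> P" using assms R by auto
  then have Bb: "line L B b \<in> L" "b \<in> line L B b" "B \<in> line L B b"
    using line_in_L left_in_line right_in_line by auto
  have "line L R P = par_line L P (line L B b)"
    using line_eqI[OF \<open>R \<noteq> P\<close> par_line_in_L[OF Bb(1)] R(2) in_par_line[OF Bb(1)]] .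
  then have "parallel L (line L B b) (line L R P)"
    using parallel_sym[OF par_line_parallel[OF Bb(1)]] by simp
  then have "par_line L b (line L R P) = line L B b"
    using par_line_eqI[OF line_in_L[OF \<open>R \<noteq> P\<close>] Bb(1,2)] by blast
  then show ?thesis
    using transfer_eqI[OF assms(1) R(1) assms(4,2)] Bb(3) R_def by simp
qed

lemma transfer_bij:
  assumes "l \<in> L" "b \<notin> l" "P \<notin> l" "T \<in> l"
  shows "\<exists>!Y. Y \<in> l \<and> transfer l b P Y = T"
proof
  show "transfer l P b T \<in> l \<and> transfer l b P (transfer l P b T) = T"
    using transfer_mem(1) transfer_swap assms by blast
  show "Y = transfer l P b T" if "Y \<in> l \<and> transfer l b P Y = T" for Y
    using transfer_swap[of l Y b P] that assms by simp
qed

lemma transfer_inj: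
  assumes "l \<in> L" "B \<in> l" "b \<notin> l"
    and "m \<in> L" "\<not> parallel L m (line L B b)" "P \<in> m" "P' \<in> m"
    and "transfer l b P B = transfer l b P' B"
  shows "P = P'"
proof (rule ccontr)
  assume "P \<noteq> P'"
  have "B \<noteq> b" using assms by auto
  then have Bb: "line L B b \<in> L" using line_in_L by simp
  have "parallel L (par_line L P (line L B b)) (par_line L P' (line L B b))"
    using parallel_trans[OF par_line_parallel[OF Bb] parallel_sym[OF par_line_parallel[OF Bb]]] .
  then have "par_line L P (line L B b) = par_line L P' (line L B b)"
    using parallel_eqI transfer_mem(2)[OF assms(1-3)] assms(8) by metis
  then have "m = par_line L P (line L B b)"
    using lines_eqI[OF assms(4) par_line_in_L[OF Bb] assms(6) in_par_line[OF Bb] assms(7)]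
      in_par_line[OF Bb, of P'] \<open>P \<noteq> P'\<close> by metis
  then show False
    using assms(5) par_line_parallel[OF Bb] by simp
qed

text \<open>Desargues' axiom for the triangles \<open>c b B\<close> and \<open>Q P R\<close>, where \<open>R\<close> is the transfer of \<open>B\<close>
  via \<open>(b, P)\<close>.\<close>

lemma transfer_desargues:
  assumes l: "l \<in> L" "B \<in> l" "b \<notin> l" "c \<notin> l" "P \<notin> l" "Q \<notin> l"
    and ne: "b \<noteq> c" "P \<noteq> Q" "b \<noteq> P" "c \<noteq> Q" "line L b P \<noteq> line L c Q"
    and pencil: "(parallel L (line L b P) l \<and> parallel L (line L c Q) l)
      \<or> (\<exists>X \<in> l. X \<in> line L b P \<and> X \<in> line L c Q)"
    and side: "parallel L (line L b c) (line L P Q)" "line L b c \<noteq> line L P Q"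
    and P_off: "P \<notin> line L B b"
  shows "transfer l b P B = transfer l c Q B"
proof -
  define R where "R = transfer l b P B"
  have R: "R \<in> l" "R \<in> par_line L P (line L B b)"
    using transfer_mem[OF l(1-3)] R_def by auto
  have "R \<noteq> B"
    using transfer_eq_base_iff[OF l(1-3)] P_off R_def by simp
  have ne': "B \<noteq> b" "B \<noteq> c" "P \<noteq> R" "Q \<noteq> R" using l R by auto
  have Bb: "line L B b \<in> L" using line_in_L[OF ne'(1)] .
  have PR: "line L P R = par_line L P (line L B b)"
    using line_eqI[OF ne'(3) par_line_in_L[OF Bb] in_par_line[OF Bb] R(2)] .
  have BR: "line L B R = l"
    using line_eqI[OF \<open>R \<noteq> B\<close>[symmetric] l(1,2) R(1)] .
  have "parallel L (line L c B) (line L Q R)"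
  proof (rule desargues)
    show "line L c Q \<noteq> line L b P" "line L b P \<noteq> line L B R" "line L c Q \<noteq> line L B R"
      using ne(5) BR l(3,4) left_in_line ne(3,4) by metis+
    show "parallel L (line L c Q) (line L b P) \<and> parallel L (line L b P) (line L B R) \<and>
        parallel L (line L c Q) (line L B R)
      \<or> (\<exists>X. X \<in> line L c Q \<and> X \<in> line L b P \<and> X \<in> line L B R)"
      using pencil BR parallel_sym parallel_trans by metis
    show "parallel L (line L c b) (line L Q P)" "line L c b \<noteq> line L Q P"
      using side line_commute by metis+
    show "parallel L (line L b B) (line L P R)"
      using PR line_commute parallel_sym[OF par_line_parallel[OF Bb]] by metis
    show "line L b B \<noteq> line L P R"
      using P_off left_in_line[OF ne'(3)] line_commute by metis
  qed (use l ne ne' \<open>R \<noteq> B\<close> in auto)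
  then have "R \<in> par_line L Q (line L B c)"
    using par_line_eqI[OF line_in_L[OF ne'(2)] line_in_L[OF ne'(4)] left_in_line[OF ne'(4)]]
      parallel_sym line_commute right_in_line[OF ne'(4)] by metis
  then show ?thesis
    using transfer_eqI[OF l(1,2,4) R(1)] R_def by simp
qed

section \<open>Addition with an arbitrary auxiliary point\<close>

definition add_point :: "'p set \<Rightarrow> 'p \<Rightarrow> 'p \<Rightarrow> 'p \<Rightarrow> 'p" where
  "add_point l Z b A = meet (par_line L b l) (par_line L A (line L Z b))"

definition add_via :: "'p set \<Rightarrow> 'p \<Rightarrow> 'p \<Rightarrow> 'p \<Rightarrow> 'p \<Rightarrow> 'p" where
  "add_via l Z b A B = transfer l b (add_point l Z b A) B"

lemma add_on_eq_add_via: "add_on L Z U A B = add_via (line L Z U) Z (SOME b. b \<notin> line L Z U) A B"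
  by (simp add: add_on_def add_via_def add_point_def transfer_def Let_def)

lemma add_point_lines_not_parallel:
  assumes "l \<in> L" "Z \<in> l" "b \<notin> l"
  shows "\<not> parallel L (par_line L b l) (par_line L A (line L Z b))"
proof -
  have "Z \<noteq> b" using assms by auto
  then have Zb: "line L Z b \<in> L" using line_in_L by simp
  show ?thesis
    using not_parallel_line_off[OF assms] parallel_trans parallel_sym
      par_line_parallel[OF assms(1)] par_line_parallel[OF Zb] by metis
qed

lemma add_point_mem:
  assumes "l \<in> L" "Z \<in> l" "A \<in> l" "b \<notin> l"
  shows "add_point l Z b A \<in> par_line L b l" "add_point l Z b A \<in> par_line L A (line L Z b)"
    "add_point l Z b A \<notin> l"
proof -
  have "Z \<noteq> b" using assms by auto
  then show "add_point l Z b A \<in> par_line L b l" "add_point l Z b A \<in> par_line L A (line L Z b)"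
    using meet_mem[OF par_line_in_L[OF assms(1)] par_line_in_L[OF line_in_L]
        add_point_lines_not_parallel[OF assms(1,2,4)]]
    unfolding add_point_def by auto
  then show "add_point l Z b A \<notin> l"
    using par_line_disjoint[OF assms(1,4)] by blast
qed

lemma add_point_eq_iff:
  assumes "l \<in> L" "Z \<in> l" "A \<in> l" "b \<notin> l"
  shows "add_point l Z b A = b \<longleftrightarrow> A = Z"
proof -
  have "Z \<noteq> b" using assms by auto
  then have Zb: "line L Z b \<in> L" "Z \<in> line L Z b" "b \<in> line L Z b"
    using line_in_L left_in_line right_in_line by auto
  show ?thesis
  proof
    assume "add_point l Z b A = b"
    then have "par_line L A (line L Z b) = line L Z b"
      using add_point_mem(2)[OF assms] parallel_eqI[OF par_line_parallel[OF Zb(1)]] Zb(3) by metis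
    then show "A = Z"
      using line_off_inter_eq[OF assms(1,2,4,3)] in_par_line[OF Zb(1), of A] by metis
  next
    assume "A = Z"
    moreover have "par_line L b l \<noteq> line L Z b"
      using par_line_disjoint[OF assms(1,4)] assms(2) Zb(2) by blast
    ultimately show "add_point l Z b A = b"
      unfolding add_point_def
      using par_line_self[OF Zb(1,2)] meet_eqI[OF par_line_in_L[OF assms(1)] Zb(1)]
        in_par_line[OF assms(1)] Zb(3) by metis
  qed
qed

lemma add_point_off_base:
  assumes "l \<in> L" "Z \<in> l" "A \<in> l" "B \<in> l" "b \<notin> l" "A \<noteq> Z"
  shows "add_point l Z b A \<notin> line L B b"
proof
  assume P: "add_point l Z b A \<in> line L B b"
  have "B \<noteq> b" using assms by auto
  have "add_point l Z b A \<noteq> b"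
    using add_point_eq_iff[OF assms(1-3,5)] assms(6) by simp
  then have "line L B b = par_line L b l"
    using lines_eqI[OF line_in_L[OF \<open>B \<noteq> b\<close>] par_line_in_L[OF assms(1)] P
        add_point_mem(1)[OF assms(1-3,5)] right_in_line[OF \<open>B \<noteq> b\<close>] in_par_line[OF assms(1)]]
    by blast
  then show False
    using par_line_disjoint[OF assms(1,5)] left_in_line[OF \<open>B \<noteq> b\<close>] assms(4) by blast
qed

lemma add_point_inj:
  assumes "l \<in> L" "Z \<in> l" "A \<in> l" "A' \<in> l" "b \<notin> l"
    and "add_point l Z b A = add_point l Z b A'"
  shows "A = A'"
proof (rule ccontr)
  assume "A \<noteq> A'"
  have "Z \<noteq> b" using assms by auto
  then have Zb: "line L Z b \<in> L" using line_in_L by simp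
  have "par_line L A (line L Z b) = par_line L A' (line L Z b)"
    using par_line_of_mem[OF Zb] add_point_mem(2)[OF assms(1,2,3,5)]
      add_point_mem(2)[OF assms(1,2,4,5)] assms(6) by metis
  then have "l = par_line L A (line L Z b)"
    using lines_eqI[OF assms(1) par_line_in_L[OF Zb] assms(3) in_par_line[OF Zb] assms(4)]
      in_par_line[OF Zb, of A'] \<open>A \<noteq> A'\<close> by metis
  then show False
    using not_parallel_line_off[OF assms(1,2,5)] parallel_trans par_line_parallel[OF Zb] by metis
qed

lemma add_via_mem: "l \<in> L \<Longrightarrow> B \<in> l \<Longrightarrow> b \<notin> l \<Longrightarrow> add_via l Z b A B \<in> l"
  unfolding add_via_def by (rule transfer_mem)

lemma add_via_zero_left:
  assumes "l \<in> L" "Z \<in> l" "B \<in> l" "b \<notin> l"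
  shows "add_via l Z b Z B = B"
proof -
  have "B \<noteq> b" using assms by auto
  then show ?thesis
    unfolding add_via_def add_point_eq_iff[OF assms(1,2,2,4), THEN iffD2, OF refl]
    using transfer_eq_base_iff[OF assms(1,3,4)] right_in_line by blast
qed

lemma add_via_zero_right:
  assumes "l \<in> L" "Z \<in> l" "A \<in> l" "b \<notin> l"
  shows "add_via l Z b A Z = A"
proof -
  have "Z \<noteq> b" using assms by auto
  then have Zb: "line L Z b \<in> L" using line_in_L by simp
  show ?thesis
    unfolding add_via_def
    using transfer_eqI[OF assms(1,2,4,3)] par_line_of_mem[OF Zb add_point_mem(2)[OF assms]]
      in_par_line[OF Zb] by metis
qed

lemma add_via_indep_off_par_line:
  assumes l: "l \<in> L" "Z \<in> l" "A \<in> l" "B \<in> l" "b \<notin> l" "c \<notin> l"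
    and "A \<noteq> Z" "B \<noteq> Z" and c: "c \<notin> par_line L b l"
  shows "add_via l Z b A B = add_via l Z c A B"
proof -
  define Pb Pc where "Pb = add_point l Z b A" and "Pc = add_point l Z c A"
  define mb mc where "mb = par_line L b l" and "mc = par_line L c l"
  note Pb = add_point_mem[OF l(1-3,5), folded Pb_def mb_def]
  note Pc = add_point_mem[OF l(1-3,6), folded Pc_def mc_def]
  have m: "mb \<in> L" "mc \<in> L" "b \<in> mb" "c \<in> mc" "parallel L mb l" "parallel L mc l"
    using par_line_in_L in_par_line par_line_parallel l(1) unfolding mb_def mc_def by auto
  have "mb \<noteq> mc" using c m unfolding mb_def by auto
  then have "mb \<inter> mc = {}"
    using parallel_trans[OF m(5) parallel_sym[OF m(6)]] by (auto simp: parallel_def)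
  then have "Pb \<noteq> Pc" "b \<noteq> c" using Pb Pc m by auto
  have "Pb \<noteq> b" "Pc \<noteq> c"
    using add_point_eq_iff l \<open>A \<noteq> Z\<close> unfolding Pb_def Pc_def by auto
  have ne: "Z \<noteq> b" "Z \<noteq> c" "A \<noteq> Pb" "A \<noteq> Pc" using l Pb Pc by auto
  have bPb: "line L b Pb = mb" and cPc: "line L c Pc = mc"
    using line_eqI \<open>Pb \<noteq> b\<close> \<open>Pc \<noteq> c\<close> Pb Pc m by auto
  have ZA: "line L Z A = l" using line_eqI \<open>A \<noteq> Z\<close> l by auto
  have PbA: "line L Pb A = par_line L A (line L Z b)"
    and APc: "line L A Pc = par_line L A (line L Z c)"
    using line_eqI[OF ne(3)] line_eqI[OF ne(4)[symmetric]] par_line_in_L line_in_L in_par_line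
      Pb Pc ne line_commute by metis+
  have A_off: "A \<notin> line L Z b" "A \<notin> line L Z c"
    using line_off_inter_eq l \<open>A \<noteq> Z\<close> by blast+
  have "parallel L (line L b c) (line L Pb Pc)"
  proof (rule desargues)
    show "line L b Pb \<noteq> line L Z A" "line L Z A \<noteq> line L c Pc" "line L b Pb \<noteq> line L c Pc"
      using bPb cPc ZA m l(5,6) \<open>mb \<noteq> mc\<close> by auto
    show "parallel L (line L b Pb) (line L Z A) \<and> parallel L (line L Z A) (line L c Pc) \<and>
        parallel L (line L b Pb) (line L c Pc)
      \<or> (\<exists>X. X \<in> line L b Pb \<and> X \<in> line L Z A \<and> X \<in> line L c Pc)"
      using bPb cPc ZA m parallel_sym parallel_trans by metis
    show "parallel L (line L b Z) (line L Pb A)" "parallel L (line L Z c) (line L A Pc)"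
      using PbA APc line_commute parallel_sym par_line_parallel line_in_L ne by metis+
    show "line L b Z \<noteq> line L Pb A" "line L Z c \<noteq> line L A Pc"
      using PbA APc line_commute in_par_line line_in_L ne A_off by metis+
  qed (use ne \<open>A \<noteq> Z\<close> \<open>Pb \<noteq> b\<close> \<open>Pc \<noteq> c\<close> \<open>b \<noteq> c\<close> \<open>Pb \<noteq> Pc\<close> in auto)
  moreover have "Pb \<notin> line L b c"
    using line_off_inter_eq[OF m(1,3)] c Pb(1) \<open>Pb \<noteq> b\<close> unfolding mb_def by blast
  then have "line L b c \<noteq> line L Pb Pc"
    using left_in_line \<open>Pb \<noteq> Pc\<close> by metis
  ultimately show ?thesis
    unfolding add_via_def Pb_def[symmetric] Pc_def[symmetric]
    using transfer_desargues[OF l(1,4,5,6) Pb(3) Pc(3) \<open>b \<noteq> c\<close> \<open>Pb \<noteq> Pc\<close>]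
      \<open>Pb \<noteq> b\<close> \<open>Pc \<noteq> c\<close> bPb cPc \<open>mb \<noteq> mc\<close> m(5,6)
      add_point_off_base[OF l(1-5) \<open>A \<noteq> Z\<close>, folded Pb_def] by metis
qed

text \<open>The plane of order 2: there \<open>l\<close> and the parallel through \<open>b\<close> cover the plane, so
  \<open>add_via_indep\<close> finds no intermediate auxiliary point and needs this instead.\<close>

lemma two_points_if_parallels_cover:
  assumes "l \<in> L" "m \<in> L" "l \<inter> m = {}" "\<And>X. X \<in> l \<or> X \<in> m"
    and "Z \<in> l" "X \<in> l" "Y \<in> l" "X \<noteq> Z" "Y \<noteq> Z"
  shows "X = Y"
proof -
  obtain b c where bc: "b \<noteq> c" "b \<in> m" "c \<in> m"
    using line_has_two_points[OF assms(2)] by blast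
  have off: "b \<notin> l" "c \<notin> l" "Z \<notin> m" "X \<notin> m" "Y \<notin> m"
    using assms bc by auto
  have disjoint: "line L c W \<inter> line L Z b = {}" if "W \<in> l" "W \<noteq> Z" for W
  proof -
    have "W \<notin> m" using that assms(3) by auto
    have "y \<notin> l" if "y \<in> line L c W" "y \<in> line L Z b" for y
      using line_off_inter_eq[OF assms(1) \<open>W \<in> l\<close> off(2), of y]
        line_off_inter_eq[OF assms(1,5) off(1), of y] that line_commute \<open>W \<noteq> Z\<close> by metis
    moreover have "y \<notin> m" if "y \<in> line L c W" "y \<in> line L Z b" for y
      using line_off_inter_eq[OF assms(2) bc(3) \<open>W \<notin> m\<close>, of y]
        line_off_inter_eq[OF assms(2) bc(2) off(3), of y] that line_commute bc(1) by metis
    ultimately show ?thesis using assms(4) by blast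
  qed
  have "c \<notin> line L Z b"
    using line_off_inter_eq[OF assms(2) bc(2) off(3) bc(3)] line_commute bc(1) by metis
  moreover have "Z \<noteq> b" "c \<noteq> X" "c \<noteq> Y" using off assms by auto
  ultimately have "line L c X = line L c Y"
    using playfair[OF line_in_L[of Z b]] disjoint[of X] disjoint[of Y] assms line_in_L
      left_in_line by metis
  then show ?thesis
    using line_off_inter_eq[OF assms(1,6) off(2) assms(7)] right_in_line[OF \<open>c \<noteq> Y\<close>] line_commute
    by metis
qed

lemma add_via_indep:
  assumes l: "l \<in> L" "Z \<in> l" "A \<in> l" "B \<in> l" "b \<notin> l" "c \<notin> l"
  shows "add_via l Z b A B = add_via l Z c A B"
proof (cases "A = Z \<or> B = Z")
  case True
  then show ?thesis
    using add_via_zero_left add_via_zero_right l by metis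
next
  case False
  then have "A \<noteq> Z" "B \<noteq> Z" by auto
  note generic = add_via_indep_off_par_line[OF l(1-4) _ _ \<open>A \<noteq> Z\<close> \<open>B \<noteq> Z\<close>]
  consider "c \<notin> par_line L b l" | d where "c \<in> par_line L b l" "d \<notin> l" "d \<notin> par_line L b l"
    | "c \<in> par_line L b l" "\<And>d. d \<in> l \<or> d \<in> par_line L b l"
    by blast
  then show ?thesis
  proof cases
    case 1
    then show ?thesis using generic l by blast
  next
    case 2
    have "par_line L d l \<noteq> par_line L b l"
      using \<open>d \<notin> par_line L b l\<close> in_par_line[OF l(1)] by metis
    then have "c \<notin> par_line L d l"
      using par_line_of_mem[OF l(1)] \<open>c \<in> par_line L b l\<close> by metis
    then show ?thesis
      using generic[of b d] generic[of d c] 2 l by metis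
  next
    case 3
    have cover: "X = Y" if "X \<in> l" "Y \<in> l" "X \<noteq> Z" "Y \<noteq> Z" for X Y
      using two_points_if_parallels_cover[OF l(1) par_line_in_L[OF l(1)] _ 3(2) l(2) that]
        par_line_disjoint[OF l(1,5)] by blast
    have "add_via l Z e A B = Z" if "e \<notin> l" for e
      using cover[OF add_via_mem[OF l(1,4) that] l(4) _ \<open>B \<noteq> Z\<close>]
        transfer_eq_base_iff[OF l(1,4) that] add_point_off_base[OF l(1-4) that \<open>A \<noteq> Z\<close>]
      unfolding add_via_def by blast
    then show ?thesis using l by metis
  qed
qed

section \<open>Multiplication with an arbitrary auxiliary point\<close>

definition mul_point :: "'p set \<Rightarrow> 'p \<Rightarrow> 'p \<Rightarrow> 'p \<Rightarrow> 'p \<Rightarrow> 'p" where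
  "mul_point l Z U b A = meet (par_line L A (line L U b)) (line L Z b)"

definition mul_via :: "'p set \<Rightarrow> 'p \<Rightarrow> 'p \<Rightarrow> 'p \<Rightarrow> 'p \<Rightarrow> 'p \<Rightarrow> 'p" where
  "mul_via l Z U b A B = transfer l b (mul_point l Z U b A) B"

lemma mul_on_eq_mul_via:
  "mul_on L Z U A B = mul_via (line L Z U) Z U (SOME b. b \<notin> line L Z U) A B"
  by (simp add: mul_on_def mul_via_def mul_point_def transfer_def Let_def)

context
  fixes l Z U b
  assumes l: "l \<in> L" "Z \<in> l" "U \<in> l" "Z \<noteq> U" "b \<notin> l"
begin

lemma mul_aux_lines:
  shows "line L Z b \<in> L" "Z \<in> line L Z b" "b \<in> line L Z b"
    and "line L U b \<in> L" "U \<in> line L U b" "b \<in> line L U b"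
    and "\<not> parallel L (line L U b) (line L Z b)"
proof -
  have "Z \<noteq> b" "U \<noteq> b" using l by auto
  then show Zb: "line L Z b \<in> L" "Z \<in> line L Z b" "b \<in> line L Z b"
    and Ub: "line L U b \<in> L" "U \<in> line L U b" "b \<in> line L U b"
    using line_in_L left_in_line right_in_line by auto
  have "U \<notin> line L Z b"
    using line_off_inter_eq[OF l(1,2,5,3)] l(4) by metis
  then show "\<not> parallel L (line L U b) (line L Z b)"
    using not_parallelI[OF Ub(1) Zb(1) _ Ub(3) Zb(3)] Ub(2) by blast
qed

lemma mul_point_lines_not_parallel: "\<not> parallel L (par_line L A (line L U b)) (line L Z b)"
  using mul_aux_lines(7) parallel_trans[OF parallel_sym[OF par_line_parallel[OF mul_aux_lines(4)]]]
  by blast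

lemma mul_point_mem:
  assumes "A \<in> l"
  shows "mul_point l Z U b A \<in> par_line L A (line L U b)" "mul_point l Z U b A \<in> line L Z b"
  using meet_mem[OF par_line_in_L mul_aux_lines(1) mul_point_lines_not_parallel] mul_aux_lines(4)
  unfolding mul_point_def by auto

lemma mul_point_eq_zero_iff:
  assumes "A \<in> l"
  shows "mul_point l Z U b A = Z \<longleftrightarrow> A = Z"
proof
  assume "mul_point l Z U b A = Z"
  then have "Z \<in> par_line L A (line L U b)"
    using mul_point_mem[OF assms] by metis
  show "A = Z"
  proof (rule ccontr)
    assume "A \<noteq> Z"
    then have "par_line L A (line L U b) = l"
      using lines_eqI[OF par_line_in_L[OF mul_aux_lines(4)] l(1) in_par_line[OF mul_aux_lines(4)]
          assms \<open>Z \<in> par_line L A _\<close> l(2)] by blast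
    then have "line L U b = l"
      using parallel_eqI[OF par_line_parallel[OF mul_aux_lines(4)]] mul_aux_lines(5) l(3) by metis
    then show False using mul_aux_lines(6) l(5) by blast
  qed
next
  assume "A = Z"
  have "par_line L Z (line L U b) \<noteq> line L Z b"
    using mul_aux_lines(7) par_line_parallel[OF mul_aux_lines(4)] parallel_sym by metis
  then show "mul_point l Z U b A = Z"
    unfolding mul_point_def \<open>A = Z\<close>
    using meet_eqI[OF par_line_in_L[OF mul_aux_lines(4)] mul_aux_lines(1) _
        in_par_line[OF mul_aux_lines(4)] mul_aux_lines(2)] by blast
qed

lemma mul_point_eq_base_iff:
  assumes "A \<in> l"
  shows "mul_point l Z U b A = b \<longleftrightarrow> A = U"
proof
  assume "mul_point l Z U b A = b"
  then have "par_line L A (line L U b) = line L U b"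
    using mul_point_mem(1)[OF assms] parallel_eqI[OF par_line_parallel[OF mul_aux_lines(4)]]
      mul_aux_lines(6) by metis
  then show "A = U"
    using line_off_inter_eq[OF l(1,3,5) assms] in_par_line[OF mul_aux_lines(4), of A] by simp
next
  assume "A = U"
  have "line L U b \<noteq> line L Z b"
    using mul_aux_lines(1,7) parallel_refl by metis
  then show "mul_point l Z U b A = b"
    unfolding mul_point_def \<open>A = U\<close> par_line_self[OF mul_aux_lines(4,5)]
    using meet_eqI mul_aux_lines by blast
qed

lemma mul_point_off:
  assumes "A \<in> l" "A \<noteq> Z"
  shows "mul_point l Z U b A \<notin> l"
  using line_off_inter_eq[OF l(1,2,5) _ mul_point_mem(2)[OF assms(1)]]
    mul_point_eq_zero_iff[OF assms(1)] assms(2) by blast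

lemma mul_point_off_base:
  assumes "A \<in> l" "A \<noteq> Z" "A \<noteq> U" "B \<in> l" "B \<noteq> Z"
  shows "mul_point l Z U b A \<notin> line L B b"
proof
  assume P: "mul_point l Z U b A \<in> line L B b"
  have "B \<noteq> b" using assms l by auto
  have "mul_point l Z U b A \<noteq> b"
    using mul_point_eq_base_iff assms by simp
  then have "line L B b = line L Z b"
    using lines_eqI[OF line_in_L[OF \<open>B \<noteq> b\<close>] mul_aux_lines(1) P mul_point_mem(2)[OF assms(1)]
        right_in_line[OF \<open>B \<noteq> b\<close>] mul_aux_lines(3)] by blast
  then show False
    using line_off_inter_eq[OF l(1,2,5) assms(4)] left_in_line[OF \<open>B \<noteq> b\<close>] assms(5) by metis
qed

lemma mul_via_zero_left: "B \<in> l \<Longrightarrow> mul_via l Z U b Z B = Z"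
  unfolding mul_via_def mul_point_eq_zero_iff[OF l(2), THEN iffD2, OF refl]
  using transfer_of_mem l by blast

lemma mul_via_one_left:
  assumes "B \<in> l"
  shows "mul_via l Z U b U B = B"
proof -
  have "B \<noteq> b" using assms l(5) by auto
  then show ?thesis
    unfolding mul_via_def mul_point_eq_base_iff[OF l(3), THEN iffD2, OF refl]
    using transfer_eq_base_iff[OF l(1) assms l(5)] right_in_line by blast
qed

lemma mul_via_zero_right: "A \<in> l \<Longrightarrow> mul_via l Z U b A Z = Z"
  unfolding mul_via_def using mul_point_mem(2) transfer_eq_base_iff[OF l(1,2,5)] by blast

end

lemma mul_via_indep_off_line:
  assumes l: "l \<in> L" "Z \<in> l" "U \<in> l" "Z \<noteq> U" "A \<in> l" "B \<in> l" "b \<notin> l" "c \<notin> l"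
    and "A \<noteq> Z" "A \<noteq> U" "B \<noteq> Z" and c: "c \<notin> line L Z b"
  shows "mul_via l Z U b A B = mul_via l Z U c A B"
proof -
  define Pb Pc where "Pb = mul_point l Z U b A" and "Pc = mul_point l Z U c A"
  note lb = mul_aux_lines[OF l(1-4,7)] and lc = mul_aux_lines[OF l(1-4,8)]
  note Pb = mul_point_mem[OF l(1-4,7,5), folded Pb_def]
  note Pc = mul_point_mem[OF l(1-4,8,5), folded Pc_def]
  have "Pb \<noteq> Z" "Pc \<noteq> Z" "Pb \<noteq> b" "Pc \<noteq> c"
    using mul_point_eq_zero_iff mul_point_eq_base_iff l \<open>A \<noteq> Z\<close> \<open>A \<noteq> U\<close>
    unfolding Pb_def Pc_def by auto
  have "Pb \<notin> l" "Pc \<notin> l"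
    using mul_point_off l \<open>A \<noteq> Z\<close> unfolding Pb_def Pc_def by auto
  have "line L Z b \<noteq> line L Z c" using c lc(3) by auto
  then have "Pb \<noteq> Pc"
    using lines_eqI[OF lb(1) lc(1) Pb(2) _ lb(2) lc(2)] Pc(2) \<open>Pb \<noteq> Z\<close> by metis
  have "b \<noteq> c" using c lb(3) by auto
  have bPb: "line L b Pb = line L Z b" and cPc: "line L c Pc = line L Z c"
    using line_eqI[OF \<open>Pb \<noteq> b\<close>[symmetric] lb(1) lb(3) Pb(2)]
      line_eqI[OF \<open>Pc \<noteq> c\<close>[symmetric] lc(1) lc(3) Pc(2)] by auto
  have UA: "line L U A = l" using line_eqI \<open>A \<noteq> U\<close> l by auto
  have ne: "U \<noteq> b" "U \<noteq> c" "A \<noteq> Pb" "A \<noteq> Pc" using l \<open>Pb \<notin> l\<close> \<open>Pc \<notin> l\<close> by auto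
  have PbA: "line L Pb A = par_line L A (line L U b)"
    and APc: "line L A Pc = par_line L A (line L U c)"
    using line_eqI[OF ne(3)[symmetric] par_line_in_L[OF lb(4)] Pb(1) in_par_line[OF lb(4)]]
      line_eqI[OF ne(4) par_line_in_L[OF lc(4)] in_par_line[OF lc(4)] Pc(1)] by auto
  have A_off: "A \<notin> line L U b" "A \<notin> line L U c"
    using line_off_inter_eq[OF l(1,3)] l \<open>A \<noteq> U\<close> by blast+
  have "parallel L (line L b c) (line L Pb Pc)"
  proof (rule desargues)
    show "line L b Pb \<noteq> line L U A" "line L U A \<noteq> line L c Pc" "line L b Pb \<noteq> line L c Pc"
      using bPb cPc UA lb(3) lc(3) l(7,8) \<open>line L Z b \<noteq> line L Z c\<close> by auto
    show "parallel L (line L b Pb) (line L U A) \<and> parallel L (line L U A) (line L c Pc) \<and>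
        parallel L (line L b Pb) (line L c Pc)
      \<or> (\<exists>X. X \<in> line L b Pb \<and> X \<in> line L U A \<and> X \<in> line L c Pc)"
      using bPb cPc UA lb(2) lc(2) l(2) by auto
    show "parallel L (line L b U) (line L Pb A)" "parallel L (line L U c) (line L A Pc)"
      using PbA APc line_commute parallel_sym par_line_parallel lb(4) lc(4) by metis+
    show "line L b U \<noteq> line L Pb A" "line L U c \<noteq> line L A Pc"
      using PbA APc line_commute in_par_line lb(4) lc(4) A_off by metis+
  qed (use ne l \<open>A \<noteq> U\<close> \<open>Pb \<noteq> b\<close> \<open>Pc \<noteq> c\<close> \<open>b \<noteq> c\<close> \<open>Pb \<noteq> Pc\<close> in auto)
  moreover have "Pb \<notin> line L b c"
    using line_off_inter_eq[OF lb(1,3) c Pb(2)] \<open>Pb \<noteq> b\<close> by blast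
  then have "line L b c \<noteq> line L Pb Pc"
    using left_in_line \<open>Pb \<noteq> Pc\<close> by metis
  moreover have "\<exists>X\<in>l. X \<in> line L b Pb \<and> X \<in> line L c Pc"
    using bPb cPc lb(2) lc(2) l(2) by auto
  ultimately show ?thesis
    unfolding mul_via_def Pb_def[symmetric] Pc_def[symmetric]
    using transfer_desargues[OF l(1,6,7,8) \<open>Pb \<notin> l\<close> \<open>Pc \<notin> l\<close> \<open>b \<noteq> c\<close> \<open>Pb \<noteq> Pc\<close>
        \<open>Pb \<noteq> b\<close>[symmetric] \<open>Pc \<noteq> c\<close>[symmetric]]
      bPb cPc \<open>line L Z b \<noteq> line L Z c\<close>
      mul_point_off_base[OF l(1-4,7,5) \<open>A \<noteq> Z\<close> \<open>A \<noteq> U\<close> l(6) \<open>B \<noteq> Z\<close>, folded Pb_def] by metis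
qed

lemma mul_via_indep:
  assumes l: "l \<in> L" "Z \<in> l" "U \<in> l" "Z \<noteq> U" "A \<in> l" "B \<in> l" "b \<notin> l" "c \<notin> l"
  shows "mul_via l Z U b A B = mul_via l Z U c A B"
proof (cases "A = Z \<or> A = U \<or> B = Z")
  case True
  then show ?thesis
    using mul_via_zero_left mul_via_one_left mul_via_zero_right l by metis
next
  case False
  then have "A \<noteq> Z" "A \<noteq> U" "B \<noteq> Z" by auto
  note generic = mul_via_indep_off_line[OF l(1-6) _ _ \<open>A \<noteq> Z\<close> \<open>A \<noteq> U\<close> \<open>B \<noteq> Z\<close>]
  show ?thesis
  proof (cases "c \<in> line L Z b")
    case False
    then show ?thesis using generic l by blast
  next
    case True
    note lb = mul_aux_lines[OF l(1-4,7)]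
    define n where "n = par_line L Z (line L U b)"
    have n: "n \<in> L" "Z \<in> n" "parallel L n (line L U b)"
      using par_line_in_L in_par_line par_line_parallel lb(4) unfolding n_def by auto
    obtain W where "W \<in> n" "W \<noteq> Z"
      using line_has_two_points[OF n(1)] by metis
    have "n \<noteq> l"
    proof
      assume "n = l"
      then have "l = line L U b"
        using parallel_eqI[OF n(3)] l(3) lb(5) by metis
      then show False using lb(6) l(7) by blast
    qed
    then have "W \<notin> l"
      using lines_eqI[OF n(1) l(1) \<open>W \<in> n\<close> _ n(2) l(2) \<open>W \<noteq> Z\<close>] by blast
    have "n \<noteq> line L Z b"
      using n(2) n(3) lb(2,7) parallel_sym by metis
    then have "W \<notin> line L Z b"
      using lines_eqI[OF n(1) lb(1) \<open>W \<in> n\<close> _ n(2) lb(2) \<open>W \<noteq> Z\<close>] by blast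
    moreover have "c \<notin> line L Z W"
      using line_eqI[OF \<open>W \<noteq> Z\<close>[symmetric]] line_in_L[OF \<open>W \<noteq> Z\<close>[symmetric]]
        left_in_line right_in_line lines_eqI[OF lb(1) _ lb(2) _ True] l(8) lb(2)
        \<open>W \<notin> line L Z b\<close> \<open>W \<noteq> Z\<close> l(2) by metis
    ultimately show ?thesis
      using generic[of b W] generic[of W c] \<open>W \<notin> l\<close> l by metis
  qed
qed

section \<open>Negatives, inverses and differences\<close>

lemma add_via_cancel_right:
  assumes "l \<in> L" "Z \<in> l" "X \<in> l" "Y \<in> l" "N \<in> l" "b \<notin> l"
    and "add_via l Z b X N = add_via l Z b Y N"
  shows "X = Y"
proof -
  have "N \<noteq> b" using assms by auto
  then have Nb: "line L N b \<in> L" "N \<in> line L N b" "b \<in> line L N b"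
    using line_in_L left_in_line right_in_line by auto
  have "line L N b \<noteq> par_line L b l"
    using par_line_disjoint[OF assms(1,6)] assms(5) Nb(2) by blast
  then have "\<not> parallel L (par_line L b l) (line L N b)"
    using not_parallelI[OF par_line_in_L[OF assms(1)] Nb(1) _ in_par_line[OF assms(1)] Nb(3)]
    by metis
  then have "add_point l Z b X = add_point l Z b Y"
    using transfer_inj[OF assms(1,5,6) par_line_in_L[OF assms(1)]] add_point_mem(1) assms
    unfolding add_via_def by blast
  then show ?thesis
    using add_point_inj assms by blast
qed

context
  fixes Z U :: 'p
  assumes ZU: "Z \<noteq> U"
begin

lemma line_ZU: "line L Z U \<in> L" "Z \<in> line L Z U" "U \<in> line L Z U"
  using line_in_L left_in_line right_in_line ZU by auto

lemma some_point_off_ZU: "(SOME b. b \<notin> line L Z U) \<notin> line L Z U"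
  using some_point_off_line line_ZU by blast

lemma add_on_mem: "X \<in> line L Z U \<Longrightarrow> Y \<in> line L Z U \<Longrightarrow> add_on L Z U X Y \<in> line L Z U"
  unfolding add_on_eq_add_via using add_via_mem line_ZU some_point_off_ZU by blast

lemma add_on_cancel_right:
  "X \<in> line L Z U \<Longrightarrow> Y \<in> line L Z U \<Longrightarrow> N \<in> line L Z U \<Longrightarrow>
    add_on L Z U X N = add_on L Z U Y N \<Longrightarrow> X = Y"
  unfolding add_on_eq_add_via using add_via_cancel_right line_ZU some_point_off_ZU by blast

lemma add_on_solvable:
  "X \<in> line L Z U \<Longrightarrow> T \<in> line L Z U \<Longrightarrow> \<exists>!Y. Y \<in> line L Z U \<and> add_on L Z U X Y = T"
  unfolding add_on_eq_add_via add_via_def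
  using transfer_bij add_point_mem(3) line_ZU some_point_off_ZU by blast

lemma mul_on_solvable:
  "X \<in> line L Z U \<Longrightarrow> X \<noteq> Z \<Longrightarrow> T \<in> line L Z U \<Longrightarrow> \<exists>!Y. Y \<in> line L Z U \<and> mul_on L Z U X Y = T"
  unfolding mul_on_eq_mul_via mul_via_def
  using transfer_bij mul_point_off line_ZU ZU some_point_off_ZU by blast

lemma neg_on_spec:
  "X \<in> line L Z U \<Longrightarrow> neg_on L Z U X \<in> line L Z U \<and> add_on L Z U X (neg_on L Z U X) = Z"
  unfolding neg_on_def by (rule theI'[OF add_on_solvable[OF _ line_ZU(2)]])

lemma neg_on_eqI:
  "X \<in> line L Z U \<Longrightarrow> Y \<in> line L Z U \<Longrightarrow> add_on L Z U X Y = Z \<Longrightarrow> neg_on L Z U X = Y"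
  unfolding neg_on_def by (rule the1_equality[OF add_on_solvable[OF _ line_ZU(2)]]) auto

lemma inv_on_spec: "X \<in> line L Z U \<Longrightarrow> X \<noteq> Z \<Longrightarrow>
    inv_on L Z U X \<in> line L Z U \<and> mul_on L Z U X (inv_on L Z U X) = U"
  unfolding inv_on_def by (rule theI'[OF mul_on_solvable[OF _ _ line_ZU(3)]])

lemma inv_on_eqI:
  "X \<in> line L Z U \<Longrightarrow> X \<noteq> Z \<Longrightarrow> Y \<in> line L Z U \<Longrightarrow> mul_on L Z U X Y = U \<Longrightarrow> inv_on L Z U X = Y"
  unfolding inv_on_def by (rule the1_equality[OF mul_on_solvable[OF _ _ line_ZU(3)]]) auto

lemma sub_on_mem: "X \<in> line L Z U \<Longrightarrow> Y \<in> line L Z U \<Longrightarrow> sub_on L Z U X Y \<in> line L Z U"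
  unfolding sub_on_def using add_on_mem neg_on_spec by blast

lemma sub_on_eq_zero_iff:
  assumes "X \<in> line L Z U" "Y \<in> line L Z U"
  shows "sub_on L Z U X Y = Z \<longleftrightarrow> X = Y"
  using add_on_cancel_right[OF assms neg_on_spec[OF assms(2), THEN conjunct1]]
    neg_on_spec[OF assms(2)]
  unfolding sub_on_def by auto

end

section \<open>Collineations preserve the coordinate operations\<close>

context
  fixes \<phi> :: "'p \<Rightarrow> 'p"
  assumes collineation: "collineation L \<phi>"
begin

lemma collineation_inj: "inj \<phi>"
  using collineation unfolding collineation_def by (simp add: bij_is_inj)

lemma collineation_image_in_L: "l \<in> L \<Longrightarrow> \<phi> ` l \<in> L"
  using collineation unfolding collineation_def by blast

lemma collineation_mem_image_iff: "\<phi> x \<in> \<phi> ` l \<longleftrightarrow> x \<in> l"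
  using collineation_inj by (simp add: inj_image_mem_iff)

lemma collineation_line:
  assumes "A \<noteq> B"
  shows "\<phi> ` line L A B = line L (\<phi> A) (\<phi> B)"
proof -
  have "\<phi> A \<noteq> \<phi> B" using assms collineation_inj by (simp add: inj_eq)
  then show ?thesis
    using line_eqI[OF _ collineation_image_in_L[OF line_in_L[OF assms]]]
      left_in_line[OF assms] right_in_line[OF assms] by blast
qed

lemma collineation_parallel:
  "l \<in> L \<Longrightarrow> m \<in> L \<Longrightarrow> parallel L (\<phi> ` l) (\<phi> ` m) \<longleftrightarrow> parallel L l m"
  unfolding parallel_def using collineation_image_in_L collineation_inj
  by (simp add: inj_image_eq_iff image_Int[symmetric])

lemma collineation_par_line: "m \<in> L \<Longrightarrow> \<phi> ` par_line L P m = par_line L (\<phi> P) (\<phi> ` m)"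
  using par_line_eqI[OF collineation_image_in_L collineation_image_in_L] par_line_in_L in_par_line
    par_line_parallel collineation_parallel collineation_mem_image_iff by metis

lemma collineation_meet:
  assumes "l \<in> L" "m \<in> L" "\<not> parallel L l m"
  shows "\<phi> (meet l m) = meet (\<phi> ` l) (\<phi> ` m)"
proof -
  have "l \<noteq> m" using assms(1,3) parallel_refl by blast
  then have "\<phi> ` l \<noteq> \<phi> ` m"
    using collineation_inj by (simp add: inj_image_eq_iff)
  moreover have "\<phi> (meet l m) \<in> \<phi> ` l" "\<phi> (meet l m) \<in> \<phi> ` m"
    using meet_mem[OF assms] by auto
  ultimately show ?thesis
    using meet_eqI[OF collineation_image_in_L[OF assms(1)] collineation_image_in_L[OF assms(2)]]
    by simp
qed

lemma collineation_transfer: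
  assumes "l \<in> L" "B \<in> l" "b \<notin> l"
  shows "\<phi> (transfer l b P B) = transfer (\<phi> ` l) (\<phi> b) (\<phi> P) (\<phi> B)"
proof -
  have "B \<noteq> b" using assms by auto
  then show ?thesis
    unfolding transfer_def
    using collineation_meet[OF assms(1) par_line_in_L not_parallel_par_line[OF assms]]
      collineation_par_line collineation_line line_in_L by metis
qed

lemma collineation_add_via:
  assumes "l \<in> L" "Z \<in> l" "A \<in> l" "B \<in> l" "b \<notin> l"
  shows "\<phi> (add_via l Z b A B) = add_via (\<phi> ` l) (\<phi> Z) (\<phi> b) (\<phi> A) (\<phi> B)"
proof -
  have "Z \<noteq> b" using assms by auto
  then have "\<phi> (add_point l Z b A) = add_point (\<phi> ` l) (\<phi> Z) (\<phi> b) (\<phi> A)"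
    unfolding add_point_def
    using collineation_meet[OF par_line_in_L par_line_in_L add_point_lines_not_parallel]
      collineation_par_line collineation_line line_in_L assms by metis
  then show ?thesis
    unfolding add_via_def using collineation_transfer assms by metis
qed

lemma collineation_mul_via:
  assumes "l \<in> L" "Z \<in> l" "U \<in> l" "Z \<noteq> U" "b \<notin> l" "B \<in> l"
  shows "\<phi> (mul_via l Z U b A B) = mul_via (\<phi> ` l) (\<phi> Z) (\<phi> U) (\<phi> b) (\<phi> A) (\<phi> B)"
proof -
  have "Z \<noteq> b" "U \<noteq> b" using assms by auto
  then have "\<phi> (mul_point l Z U b A)
      = meet (\<phi> ` par_line L A (line L U b)) (\<phi> ` line L Z b)"
    unfolding mul_point_def
    using collineation_meet[OF par_line_in_L line_in_L mul_point_lines_not_parallel[OF assms(1-5)]]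
      line_in_L by blast
  also have "\<dots> = mul_point (\<phi> ` l) (\<phi> Z) (\<phi> U) (\<phi> b) (\<phi> A)"
    unfolding mul_point_def
    using collineation_par_line[OF line_in_L] collineation_line \<open>Z \<noteq> b\<close> \<open>U \<noteq> b\<close> by simp
  finally have "\<phi> (mul_point l Z U b A) = mul_point (\<phi> ` l) (\<phi> Z) (\<phi> U) (\<phi> b) (\<phi> A)" .
  then show ?thesis
    unfolding mul_via_def using collineation_transfer assms by metis
qed

context
  fixes Z U :: 'p
  assumes ZU: "Z \<noteq> U"
begin

lemma collineation_ZU: "\<phi> Z \<noteq> \<phi> U"
  using ZU collineation_inj by (simp add: inj_eq)

lemma collineation_mem_line_ZU: "X \<in> line L Z U \<Longrightarrow> \<phi> X \<in> line L (\<phi> Z) (\<phi> U)"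
  using collineation_line[OF ZU] by blast

lemma collineation_some_off_ZU: "\<phi> (SOME b. b \<notin> line L Z U) \<notin> line L (\<phi> Z) (\<phi> U)"
  using some_point_off_ZU[OF ZU] collineation_line[OF ZU] collineation_mem_image_iff by metis

lemma collineation_add_on:
  assumes "X \<in> line L Z U" "Y \<in> line L Z U"
  shows "\<phi> (add_on L Z U X Y) = add_on L (\<phi> Z) (\<phi> U) (\<phi> X) (\<phi> Y)"
  unfolding add_on_eq_add_via
    collineation_add_via[OF line_ZU(1,2)[OF ZU] assms some_point_off_ZU[OF ZU]]
    collineation_line[OF ZU]
  by (rule add_via_indep[OF line_ZU(1,2)[OF collineation_ZU] collineation_mem_line_ZU[OF assms(1)]
        collineation_mem_line_ZU[OF assms(2)] collineation_some_off_ZU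
        some_point_off_ZU[OF collineation_ZU]])

lemma collineation_mul_on:
  assumes "X \<in> line L Z U" "Y \<in> line L Z U"
  shows "\<phi> (mul_on L Z U X Y) = mul_on L (\<phi> Z) (\<phi> U) (\<phi> X) (\<phi> Y)"
  unfolding mul_on_eq_mul_via
    collineation_mul_via[OF line_ZU[OF ZU] ZU some_point_off_ZU[OF ZU] assms(2)]
    collineation_line[OF ZU]
  by (rule mul_via_indep[OF line_ZU[OF collineation_ZU] collineation_ZU
        collineation_mem_line_ZU[OF assms(1)] collineation_mem_line_ZU[OF assms(2)]
        collineation_some_off_ZU some_point_off_ZU[OF collineation_ZU]])

lemma collineation_neg_on:
  assumes "X \<in> line L Z U"
  shows "\<phi> (neg_on L Z U X) = neg_on L (\<phi> Z) (\<phi> U) (\<phi> X)"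
  using neg_on_eqI[OF collineation_ZU collineation_mem_line_ZU[OF assms]
      collineation_mem_line_ZU[OF neg_on_spec[OF ZU assms, THEN conjunct1]]]
    collineation_add_on[OF assms neg_on_spec[OF ZU assms, THEN conjunct1]] neg_on_spec[OF ZU assms]
  by simp

lemma collineation_inv_on:
  assumes "X \<in> line L Z U" "X \<noteq> Z"
  shows "\<phi> (inv_on L Z U X) = inv_on L (\<phi> Z) (\<phi> U) (\<phi> X)"
proof -
  have "\<phi> X \<noteq> \<phi> Z" using assms collineation_inj by (simp add: inj_eq)
  then show ?thesis
    using inv_on_eqI[OF collineation_ZU collineation_mem_line_ZU[OF assms(1)] _
        collineation_mem_line_ZU[OF inv_on_spec[OF ZU assms, THEN conjunct1]]]
      collineation_mul_on[OF assms(1) inv_on_spec[OF ZU assms, THEN conjunct1]]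
      inv_on_spec[OF ZU assms]
    by simp
qed

lemma collineation_sub_on:
  assumes "X \<in> line L Z U" "Y \<in> line L Z U"
  shows "\<phi> (sub_on L Z U X Y) = sub_on L (\<phi> Z) (\<phi> U) (\<phi> X) (\<phi> Y)"
  unfolding sub_on_def
  using collineation_add_on[OF assms(1) neg_on_spec[OF ZU assms(2), THEN conjunct1]]
    collineation_neg_on[OF assms(2)] by simp

lemma collineation_ratio:
  assumes "A \<in> line L Z U" "B \<in> line L Z U" "C \<in> line L Z U" "B \<noteq> C"
  shows "\<phi> (ratio L Z U A B C) = ratio L (\<phi> Z) (\<phi> U) (\<phi> A) (\<phi> B) (\<phi> C)"
proof -
  have BC: "sub_on L Z U B C \<in> line L Z U" "sub_on L Z U B C \<noteq> Z"
    using sub_on_mem[OF ZU] sub_on_eq_zero_iff[OF ZU] assms by auto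
  show ?thesis
    unfolding ratio_def
    using collineation_mul_on[OF inv_on_spec[OF ZU BC, THEN conjunct1] sub_on_mem[OF ZU assms(1,3)]]
      collineation_inv_on[OF BC] collineation_sub_on assms
    by simp
qed

end

end

end

theorem mainTheorem11:
  fixes L :: "'p set set" and \<phi> :: "'p \<Rightarrow> 'p" and Z U A B C :: 'p
  assumes "desargues_affine_plane L"
    and "Z \<noteq> U"
    and "translation L \<phi>"
    and "A \<in> line L Z U" and "B \<in> line L Z U" and "C \<in> line L Z U"
    and "B \<noteq> C"
  shows "\<phi> (ratio L Z U A B C) = ratio L (\<phi> Z) (\<phi> U) (\<phi> A) (\<phi> B) (\<phi> C)"
proof -
  interpret desargues_plane L by unfold_locales (rule assms(1))
  have "collineation L \<phi>"
    using assms(3) unfolding translation_def dilatation_def collineation_def by auto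
  then show ?thesis
    using collineation_ratio assms by blast
qed

end
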